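(* Let $f:\{0,1\}^n\to\{0,1\}^m$ and let $S=((\Lambda,\Gamma),(s_0,\dots,s_{k-1}))$ be a step CRN all of whose rules are $(2,0)$ rules. Suppose that for each input bit $x_i$ and each output bit $y_j$ there are species $0_{x_i},1_{x_i},0_{y_j},1_{y_j}$ (these $2n+2m$ species pairwise distinct) and nonnegative integers $c_{0,x_i},c_{1,x_i},c_{0,y_j},c_{1,y_j}$, such that for every input $b\in\{0,1\}^n$: the step CRN with steps $(s_0+X(b),s_1,\dots,s_{k-1})$, where $X(b)$ consists of exactly $c_{b_i,x_i}$ copies of $(b_i)_{x_i}$ and zero copies of $(1-b_i)_{x_i}$ for each $i$, has the property that every configuration in $\mathrm{TERM}_k$ contains, for each $j$, at least $c_{a,y_j}$ copies of $a_{y_j}$ and zero copies of $(1-a)_{y_j}$, where $a=f(b)_j$. Suppose further that $b,b'\in\{0,1\}^n$ differ only in coordinate $j_0$ and that $f(b)$ and $f(b')$ differ exactly in the coordinates $i_1,\dots,i_t$. Writing $C(z)=c_{0,z}+c_{1,z}$, we have $C(x_{j_0})\ge\sum_{r=1}^t C(y_{i_r})$.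
   Context: A configuration over an ordered alphabet of species $\Lambda$ is a vector in $\mathbb{Z}_{\ge 0}^{|\Lambda|}$ of copy counts. A $(2,0)$ rule has the form $A+B\to\emptyset$ (possibly $A=B$). A configuration is terminal if no rule applies. A step CRN with $k$ steps is $((\Lambda,\Gamma),(s_0,\dots,s_{k-1}))$; $\mathrm{REACH}_1$ is the set of configurations reachable by finitely many rule applications from $s_0$ and $\mathrm{TERM}_1$ its terminal elements; for $i\ge2$, $\mathrm{REACH}_i$ is the set of configurations reachable from $T+s_{i-1}$ for some $T\in\mathrm{TERM}_{i-1}$, and $\mathrm{TERM}_i$ its terminal elements. *)

theory Defs
  imports Main "HOL-Library.Multiset"
begin

(* Configurations: multisets of species (copy counts).
   A (2,0) rule A+B -> empty is represented by the pair (A,B) (A = B allowed). *)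

definition applies :: "('a \<times> 'a) \<Rightarrow> 'a multiset \<Rightarrow> bool" where
  "applies r c \<longleftrightarrow> {# fst r, snd r #} \<subseteq># c"

definition crn_step :: "('a \<times> 'a) set \<Rightarrow> 'a multiset \<Rightarrow> 'a multiset \<Rightarrow> bool" where
  "crn_step \<Gamma> c c' \<longleftrightarrow> (\<exists>r\<in>\<Gamma>. applies r c \<and> c' = c - {# fst r, snd r #})"

definition reachable :: "('a \<times> 'a) set \<Rightarrow> 'a multiset \<Rightarrow> 'a multiset \<Rightarrow> bool" where
  "reachable \<Gamma> c c' \<longleftrightarrow> (crn_step \<Gamma>)\<^sup>*\<^sup>* c c'"

definition terminal :: "('a \<times> 'a) set \<Rightarrow> 'a multiset \<Rightarrow> bool" where
  "terminal \<Gamma> c \<longleftrightarrow> (\<forall>r\<in>\<Gamma>. \<not> applies r c)"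

(* With C = {{#}} and steps
   s_0,...,s_{k-1}, this yields TERM_k. *)
fun term_after :: "('a \<times> 'a) set \<Rightarrow> 'a multiset set \<Rightarrow> 'a multiset list \<Rightarrow> 'a multiset set" where
  "term_after \<Gamma> C [] = C"
| "term_after \<Gamma> C (s # ss) =
     term_after \<Gamma> {T'. \<exists>T\<in>C. reachable \<Gamma> (T + s) T' \<and> terminal \<Gamma> T'} ss"

definition TERM_final :: "('a \<times> 'a) set \<Rightarrow> 'a multiset list \<Rightarrow> 'a multiset set" where
  "TERM_final \<Gamma> steps = term_after \<Gamma> {{#}} steps"

definition step_crn20 :: "'a set \<Rightarrow> ('a \<times> 'a) set \<Rightarrow> 'a multiset list \<Rightarrow> bool" where
  "step_crn20 \<Lambda> \<Gamma> steps \<longleftrightarrow> finite \<Lambda> \<and> finite \<Gamma> \<and> \<Gamma> \<subseteq> \<Lambda> \<times> \<Lambda> \<and> steps \<noteq> []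
      \<and> (\<forall>s\<in>set steps. set_mset s \<subseteq> \<Lambda>)"

definition input_config :: "nat \<Rightarrow> (nat \<Rightarrow> bool \<Rightarrow> 'a) \<Rightarrow> (nat \<Rightarrow> bool \<Rightarrow> nat) \<Rightarrow> bool list \<Rightarrow> 'a multiset" where
  "input_config n sx cx b = (\<Sum>i<n. replicate_mset (cx i (b ! i)) (sx i (b ! i)))"

end

theory Submission
  imports Defs
begin

text \<open>
  Measure configurations by the size of their symmetric difference. A (2,0) rule only
  deletes molecules, so running the same rule in a second configuration, or skipping it
  when it does not apply there, never increases the distance; and the distance from a
  terminal configuration cannot grow along any run. Hence the terminal
  configurations of two runs whose inputs differ in the \<open>C(x\<^sub>j\<^sub>0)\<close> copies of
  the changed input bit can be paired at distance at most \<open>C(x\<^sub>j\<^sub>0)\<close>, whereas every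
  flipped output bit \<open>y\<^sub>i\<close> forces distance at least \<open>C(y\<^sub>i)\<close>.
\<close>

definition mset_dist :: "'a multiset \<Rightarrow> 'a multiset \<Rightarrow> nat" where
  "mset_dist A B = size (A - B) + size (B - A)"

lemma mset_dist_commute: "mset_dist A B = mset_dist B A"
  by (simp add: mset_dist_def)

lemma mset_dist_add_right: "mset_dist (A + C) (B + C) = mset_dist A B"
  by (simp add: mset_dist_def)

lemma mset_dist_le_size: "mset_dist A B \<le> size A + size B"
  unfolding mset_dist_def
  using size_mset_mono[OF diff_subset_eq_self[of A B]] size_mset_mono[OF diff_subset_eq_self[of B A]]
  by linarith

lemma mset_dist_diff_common:
  assumes "R \<subseteq># A" "R \<subseteq># B"
  shows "mset_dist (A - R) (B - R) = mset_dist A B"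
proof -
  have "(A - R) - (B - R) = A - B" "(B - R) - (A - R) = B - A"
    using assms by (auto simp: multiset_eq_iff subseteq_mset_def)
  then show ?thesis by (simp add: mset_dist_def)
qed

lemma mset_dist_remove_excess:
  assumes "count B p < count A p"
  shows "mset_dist (A - {#p#}) B + 1 = mset_dist A B"
proof -
  have p: "p \<in># A - B" using assms by (simp add: in_diff_count)
  have "(A - {#p#}) - B = (A - B) - {#p#}" by (simp add: multiset_eq_iff)
  moreover have "B - (A - {#p#}) = B - A" using assms by (auto simp: multiset_eq_iff)
  ultimately show ?thesis
    using size_Diff_singleton[OF p] size_Diff1_less[OF p] unfolding mset_dist_def
    by (metis add.commute add_Suc_right diff_Suc_1 less_imp_Suc_add plus_1_eq_Suc)
qed

lemma mset_dist_remove_one: "mset_dist (A - {#p#}) B \<le> mset_dist A B + 1"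
proof (cases "count B p < count A p")
  case True
  then show ?thesis using mset_dist_remove_excess by fastforce
next
  case False
  then have "(A - {#p#}) - B = A - B" by (auto simp: multiset_eq_iff)
  moreover have "B - (A - {#p#}) \<subseteq># (B - A) + {#p#}" by (auto simp: subseteq_mset_def)
  ultimately show ?thesis unfolding mset_dist_def using size_mset_mono by fastforce
qed

lemma mset_dist_remove_pair:
  assumes "{#p, q#} \<subseteq># A" "\<not> {#p, q#} \<subseteq># B"
  shows "mset_dist (A - {#p, q#}) B \<le> mset_dist A B"
proof -
  obtain x where x: "count B x < count {#p, q#} x"
    using assms(2) by (meson not_le subseteq_mset_def)
  then have "x \<in># {#p, q#}" by (metis count_eq_zero_iff not_less0)
  then obtain y where pq: "{#p, q#} = {#x, y#}" by auto
  have "count B x < count A x" using x assms(1) by (meson less_le_trans mset_subset_eq_count)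
  then have "mset_dist (A - {#x#}) B + 1 = mset_dist A B" by (rule mset_dist_remove_excess)
  moreover have "A - {#p, q#} = A - {#x#} - {#y#}" by (simp add: pq add_mset_commute)
  ultimately show ?thesis using mset_dist_remove_one[of "A - {#x#}" y B] by simp
qed

lemma crn_step_size_less:
  assumes "crn_step \<Gamma> A B"
  shows "size B < size A"
proof -
  obtain r where "{#fst r, snd r#} \<subseteq># A" "B = A - {#fst r, snd r#}"
    using assms by (auto simp: crn_step_def applies_def)
  moreover from this(1) have "size {#fst r, snd r#} \<le> size A" by (rule size_mset_mono)
  ultimately show ?thesis by (simp add: size_Diff_submset)
qed

lemma reachable_terminal_exists: "\<exists>T. reachable \<Gamma> A T \<and> terminal \<Gamma> T"
proof (induction "size A" arbitrary: A rule: less_induct)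
  case less
  show ?case
  proof (cases "terminal \<Gamma> A")
    case True
    then show ?thesis by (auto simp: reachable_def)
  next
    case False
    then obtain r where "r \<in> \<Gamma>" "applies r A" by (auto simp: terminal_def)
    then have step: "crn_step \<Gamma> A (A - {#fst r, snd r#})" by (auto simp: crn_step_def)
    from less(1)[OF crn_step_size_less[OF step]] step show ?thesis
      unfolding reachable_def by (meson converse_rtranclp_into_rtranclp)
  qed
qed

lemma reachable_simulation:
  assumes "reachable \<Gamma> A A'"
  shows "\<exists>B'. reachable \<Gamma> B B' \<and> mset_dist A' B' \<le> mset_dist A B"
  using assms unfolding reachable_def
proof (induction rule: rtranclp_induct)
  case base
  then show ?case by auto
next
  case (step A' A'')
  then obtain B' where B': "(crn_step \<Gamma>)\<^sup>*\<^sup>* B B'" "mset_dist A' B' \<le> mset_dist A B"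
    by auto
  from step(2) obtain r where r: "r \<in> \<Gamma>" "applies r A'" "A'' = A' - {#fst r, snd r#}"
    by (auto simp: crn_step_def)
  show ?case
  proof (cases "applies r B'")
    case True
    then have "crn_step \<Gamma> B' (B' - {#fst r, snd r#})" using r by (auto simp: crn_step_def)
    moreover have "mset_dist A'' (B' - {#fst r, snd r#}) = mset_dist A' B'"
      using r True by (simp add: applies_def mset_dist_diff_common)
    ultimately show ?thesis using B' by (metis rtranclp.rtrancl_into_rtrancl)
  next
    case False
    then have "mset_dist A'' B' \<le> mset_dist A' B'"
      using r mset_dist_remove_pair by (auto simp: applies_def)
    then show ?thesis using B' by auto
  qed
qed

lemma terminal_mset_dist_reachable_le:
  assumes "terminal \<Gamma> T" "reachable \<Gamma> A A'"
  shows "mset_dist T A' \<le> mset_dist T A"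
  using assms(2) unfolding reachable_def
proof (induction rule: rtranclp_induct)
  case base
  then show ?case by simp
next
  case (step A' A'')
  then obtain r where r: "r \<in> \<Gamma>" "applies r A'" "A'' = A' - {#fst r, snd r#}"
    by (auto simp: crn_step_def)
  have "\<not> applies r T" using assms(1) r(1) by (auto simp: terminal_def)
  then have "mset_dist A'' T \<le> mset_dist A' T"
    using r mset_dist_remove_pair by (auto simp: applies_def)
  then show ?case using step.IH by (simp add: mset_dist_commute)
qed

lemma reachable_terminal_simulation:
  assumes "reachable \<Gamma> A T" "terminal \<Gamma> T"
  shows "\<exists>T'. reachable \<Gamma> B T' \<and> terminal \<Gamma> T' \<and> mset_dist T T' \<le> mset_dist A B"
proof -
  obtain B' where B': "reachable \<Gamma> B B'" "mset_dist T B' \<le> mset_dist A B"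
    using reachable_simulation[OF assms(1)] by blast
  obtain T' where T': "reachable \<Gamma> B' T'" "terminal \<Gamma> T'"
    using reachable_terminal_exists by blast
  have "mset_dist T T' \<le> mset_dist T B'"
    using terminal_mset_dist_reachable_le[OF assms(2) T'(1)] .
  with B' T' show ?thesis unfolding reachable_def by (meson order_trans rtranclp_trans)
qed

lemma term_after_nonempty: "C \<noteq> {} \<Longrightarrow> term_after \<Gamma> C ss \<noteq> {}"
proof (induction ss arbitrary: C)
  case Nil
  then show ?case by simp
next
  case (Cons s ss)
  then obtain T where "T \<in> C" by auto
  moreover obtain T' where "reachable \<Gamma> (T + s) T'" "terminal \<Gamma> T'"
    using reachable_terminal_exists by blast
  ultimately have "{T'. \<exists>T\<in>C. reachable \<Gamma> (T + s) T' \<and> terminal \<Gamma> T'} \<noteq> {}" by auto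
  then show ?case using Cons.IH by simp
qed

lemma term_after_mset_dist_le:
  assumes "\<forall>T\<in>C. \<exists>T'\<in>C'. mset_dist T T' \<le> k"
  shows "\<forall>T\<in>term_after \<Gamma> C ss. \<exists>T'\<in>term_after \<Gamma> C' ss. mset_dist T T' \<le> k"
  using assms
proof (induction ss arbitrary: C C')
  case Nil
  then show ?case by simp
next
  case (Cons s ss)
  have "\<exists>U'\<in>{U'. \<exists>T'\<in>C'. reachable \<Gamma> (T' + s) U' \<and> terminal \<Gamma> U'}. mset_dist U U' \<le> k"
    if T: "T \<in> C" and U: "reachable \<Gamma> (T + s) U" "terminal \<Gamma> U" for T U
  proof -
    obtain T' where T': "T' \<in> C'" "mset_dist T T' \<le> k" using Cons.prems T by auto
    obtain U' where "reachable \<Gamma> (T' + s) U'" "terminal \<Gamma> U'"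
        "mset_dist U U' \<le> mset_dist (T + s) (T' + s)"
      using reachable_terminal_simulation U by blast
    with T' show ?thesis by (auto simp: mset_dist_add_right)
  qed
  then show ?case by (simp only: term_after.simps) (rule Cons.IH, blast)
qed

lemma TERM_final_mset_dist_le:
  assumes "T \<in> TERM_final \<Gamma> (A # ss)"
  shows "\<exists>T'\<in>TERM_final \<Gamma> (B # ss). mset_dist T T' \<le> mset_dist A B"
proof -
  have "\<forall>T\<in>{T. reachable \<Gamma> A T \<and> terminal \<Gamma> T}.
          \<exists>T'\<in>{T'. reachable \<Gamma> B T' \<and> terminal \<Gamma> T'}. mset_dist T T' \<le> mset_dist A B"
    using reachable_terminal_simulation by blast
  from term_after_mset_dist_le[OF this] assms show ?thesis
    by (simp add: TERM_final_def)
qed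

lemma TERM_final_nonempty: "TERM_final \<Gamma> (A # ss) \<noteq> {}"
proof -
  have "{T. reachable \<Gamma> A T \<and> terminal \<Gamma> T} \<noteq> {}"
    using reachable_terminal_exists by blast
  then show ?thesis by (simp add: TERM_final_def term_after_nonempty)
qed

lemma input_config_mset_dist_le:
  assumes "j0 < n" "b ! j0 \<noteq> b' ! j0" "\<And>i. i < n \<Longrightarrow> i \<noteq> j0 \<Longrightarrow> b ! i = b' ! i"
  shows "mset_dist (input_config n sx cx b) (input_config n sx cx b') \<le> cx j0 False + cx j0 True"
proof -
  define bit where "bit v i = replicate_mset (cx i (v ! i)) (sx i (v ! i))" for v i
  define P where "P = (\<Sum>i\<in>{..<n}-{j0}. bit b i)"
  have "P = (\<Sum>i\<in>{..<n}-{j0}. bit b' i)"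
    unfolding P_def bit_def by (rule sum.cong) (auto simp: assms(3))
  then have "input_config n sx cx b = bit b j0 + P" "input_config n sx cx b' = bit b' j0 + P"
    unfolding input_config_def P_def bit_def using assms(1) by (simp_all add: sum.remove)
  then have "mset_dist (input_config n sx cx b) (input_config n sx cx b')
               = mset_dist (bit b j0) (bit b' j0)"
    by (simp add: mset_dist_add_right)
  also have "\<dots> \<le> size (bit b j0) + size (bit b' j0)" by (rule mset_dist_le_size)
  also have "\<dots> = cx j0 False + cx j0 True"
    using assms(2) unfolding bit_def by (cases "b ! j0") auto
  finally show ?thesis .
qed

lemma sum_count_le_size:
  assumes "finite S"
  shows "(\<Sum>x\<in>S. count M x) \<le> size M"
proof -
  have "(\<Sum>x\<in>S. count M x) = (\<Sum>x\<in>S \<inter> set_mset M. count M x)"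
    using assms by (intro sum.mono_neutral_right) auto
  also have "\<dots> \<le> (\<Sum>x\<in>set_mset M. count M x)"
    by (intro sum_mono2) auto
  also have "\<dots> = size M" by (simp add: size_multiset_overloaded_eq)
  finally show ?thesis .
qed

lemma sum_lower_bounds_le_size_diff:
  assumes "finite D" "inj_on g D" "\<And>i. i \<in> D \<Longrightarrow> c i \<le> count A (g i) \<and> count B (g i) = 0"
  shows "(\<Sum>i\<in>D. c i) \<le> size (A - B)"
proof -
  have "(\<Sum>i\<in>D. c i) \<le> (\<Sum>i\<in>D. count (A - B) (g i))"
    using assms(3) by (intro sum_mono) simp
  also have "\<dots> = (\<Sum>x\<in>g ` D. count (A - B) x)"
    by (simp add: sum.reindex[OF assms(2)])
  also have "\<dots> \<le> size (A - B)"
    using assms(1) by (intro sum_count_le_size) simp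
  finally show ?thesis .
qed

lemma flipped_outputs_le_mset_dist:
  assumes inj: "\<And>i j v w. i < m \<Longrightarrow> j < m \<Longrightarrow> sy i v = sy j w \<Longrightarrow> i = j"
    and T: "\<forall>j<m. cy j (y ! j) \<le> count T (sy j (y ! j)) \<and> count T (sy j (\<not> y ! j)) = 0"
    and T': "\<forall>j<m. cy j (y' ! j) \<le> count T' (sy j (y' ! j)) \<and> count T' (sy j (\<not> y' ! j)) = 0"
  shows "(\<Sum>i\<in>{i. i < m \<and> y ! i \<noteq> y' ! i}. cy i False + cy i True) \<le> mset_dist T T'"
proof -
  define D where "D = {i. i < m \<and> y ! i \<noteq> y' ! i}"
  have inj_D: "inj_on (\<lambda>i. sy i (v i)) D" for v
    by (rule inj_onI) (use inj in \<open>auto simp: D_def\<close>)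
  have finite_D: "finite D" by (simp add: D_def)
  have bounds: "cy i (y ! i) \<le> count T (sy i (y ! i)) \<and> count T' (sy i (y ! i)) = 0"
    and bounds': "cy i (y' ! i) \<le> count T' (sy i (y' ! i)) \<and> count T (sy i (y' ! i)) = 0"
    if "i \<in> D" for i
    using T[rule_format, of i] T'[rule_format, of i] that by (auto simp: D_def)
  have "(\<Sum>i\<in>D. cy i (y ! i)) \<le> size (T - T')"
    using finite_D inj_D bounds by (rule sum_lower_bounds_le_size_diff)
  moreover have "(\<Sum>i\<in>D. cy i (y' ! i)) \<le> size (T' - T)"
    using finite_D inj_D bounds' by (rule sum_lower_bounds_le_size_diff)
  moreover have "(\<Sum>i\<in>D. cy i False + cy i True) = (\<Sum>i\<in>D. cy i (y ! i)) + (\<Sum>i\<in>D. cy i (y' ! i))"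
    by (auto simp: D_def sum.distrib[symmetric] intro: sum.cong)
  ultimately show ?thesis unfolding D_def mset_dist_def by linarith
qed

theorem mainTheorem4:
  fixes n m :: nat
    and f :: "bool list \<Rightarrow> bool list"
    and \<Lambda> :: "'a set" and \<Gamma> :: "('a \<times> 'a) set"
    and s0 :: "'a multiset" and ss :: "'a multiset list"
    and sx sy :: "nat \<Rightarrow> bool \<Rightarrow> 'a"
    and cx cy :: "nat \<Rightarrow> bool \<Rightarrow> nat"
    and b b' :: "bool list" and j0 :: nat
  assumes f_len: "\<And>b. length b = n \<Longrightarrow> length (f b) = m"
    and crn: "step_crn20 \<Lambda> \<Gamma> (s0 # ss)"
    and sx_in: "\<And>i v. i < n \<Longrightarrow> sx i v \<in> \<Lambda>"
    and sy_in: "\<And>j v. j < m \<Longrightarrow> sy j v \<in> \<Lambda>"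
    and distinct: "inj_on (\<lambda>p. case p of Inl (i, v) \<Rightarrow> sx i v | Inr (j, v) \<Rightarrow> sy j v)
                      (Inl ` ({..<n} \<times> UNIV) \<union> Inr ` ({..<m} \<times> UNIV))"
    and computes: "\<And>b. length b = n \<Longrightarrow>
         \<forall>T\<in>TERM_final \<Gamma> ((s0 + input_config n sx cx b) # ss).
           \<forall>j<m. cy j (f b ! j) \<le> count T (sy j (f b ! j))
                 \<and> count T (sy j (\<not> (f b ! j))) = 0"
    and b_len: "length b = n" and b'_len: "length b' = n"
    and j0: "j0 < n" and differ: "b ! j0 \<noteq> b' ! j0"
    and same: "\<And>i. i < n \<Longrightarrow> i \<noteq> j0 \<Longrightarrow> b ! i = b' ! i"
  shows "(\<Sum>i\<in>{i. i < m \<and> f b ! i \<noteq> f b' ! i}. cy i False + cy i True)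
           \<le> cx j0 False + cx j0 True"
proof -
  let ?A = "s0 + input_config n sx cx b" and ?A' = "s0 + input_config n sx cx b'"
  have sy_inj: "i = j" if "i < m" "j < m" "sy i v = sy j w" for i j v w
    using inj_onD[OF distinct, of "Inr (i, v)" "Inr (j, w)"] that by auto
  obtain T where T: "T \<in> TERM_final \<Gamma> (?A # ss)"
    using TERM_final_nonempty by blast
  then obtain T' where T': "T' \<in> TERM_final \<Gamma> (?A' # ss)"
    and dist_T: "mset_dist T T' \<le> mset_dist ?A ?A'"
    using TERM_final_mset_dist_le by blast
  have "mset_dist T T' \<le> cx j0 False + cx j0 True"
    using dist_T input_config_mset_dist_le[OF j0 differ same, of sx cx]
    by (simp add: add.commute[of s0] mset_dist_add_right)
  then show ?thesis
    using flipped_outputs_le_mset_dist[OF sy_inj bspec[OF computes[OF b_len] T] bspec[OF computes[OF b'_len] T']]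
    by (rule order_trans[rotated])
qed

end
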